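(* Consider any instance of the budgeted matching-market pricing problem (defined in the context) in which every buyer $i$ satisfies $b_i\ge v_i$, and let $\langle\mathbf{X},\mathbf{p}\rangle$ be the outcome obtained by Algorithm 1 (described in the context). If $X_i\neq\emptyset$, then buyer $i$ obtains all the items of $X_i$ at a unique price per item, $\bar p_i=p_i/|X_i|$.
   Context: Instance: a finite set $I$ of $n$ buyers and a finite set $J$ of $m$ distinct items. Each buyer $i$ has a preference set $S_i\subseteq J$, a value $v_i>0$ for each item of $S_i$ (value $0$ for items outside $S_i$), and a budget $b_i\ge 0$. An outcome $\langle\mathbf{X},\mathbf{p}\rangle$ consists of pairwise disjoint bundles $X_i\subseteq J$ and payments $p_i\ge 0$. Algorithm 1 (ascending price auction). Throughout, $b_i$ denotes buyer $i$'s remaining budget (initially her budget, decreased by each payment), $J$ denotes the set of currently unsold items, and $\epsilon>0$ is an arbitrarily small price increment. For a price $p>0$, the demand of buyer $i$ is $D_i(p)=\min\{\lfloor b_i/p\rfloor,|S_i|\}$ if $p\le v_i$ and $D_i(p)=0$ if $p>v_i$. Let $A^p=\{i: v_i>p, D_i(p)>0\}$, $Q^p=\{i: v_i=p, D_i(p)>0\}$, $I^p=A^p\cup Q^p$. $G^p$ is the bipartite graph on $I^p\cup J$ with an edge $(i,j)$ iff $j\in S_i$, and $\bar G^p$ is its subgraph on $A^p\cup J$. A $B$-matching of $G^p$ (or $\bar G^p$) is a set of its edges in which every buyer $i$ lies in at most $D_i(p)$ edges and every item in at most one edge; $\mathcal{M}(G^p)$ denotes a maximum one. Given a $B$-matching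 $\mathcal{M}$, an augmenting path from buyer $i$ to item $j$ is a sequence $i=y_1,z_1,y_2,z_2,\dots,y_h,z_h=j$ of buyers $y_k$ and items $z_k$ with $z_k\in S_{y_k}$, $(y_k,z_k)\notin\mathcal{M}$ for all $k$, and $(z_k,y_{k+1})\in\mathcal{M}$ for $k<h$. "Giving item $j$ to buyer $i$ at price $q$" means: remove $j$ from $J$, add $j$ to $X_i$, increase $p_i$ by $q$ and decrease $b_i$ by $q$. Start with $p=0$, $X_i=\emptyset$, $p_i=0$. While a maximum $B$-matching of $G^p$ is nonempty: increase $p$ until $|\mathcal{M}(G^p)|>|\mathcal{M}(G^{p+\epsilon})|$ (a critical price). If $|\mathcal{M}(G^p)|>|\mathcal{M}(\bar G^p)|$, run Procedure I: let $J_Q=\bigcup_{i\in Q^p}S_i$; compute a maximum $B$-matching $\mathcal{M}$ of $\bar G^p$ that matches the minimum number of items of $J_Q$; let $\bar J$ be the items of $J$ unmatched in $\mathcal{M}$ and $N(\bar J)$ the buyers having an augmenting path w.r.t. $\mathcal{M}$ to some item of $\bar J$; give each item $j$ with $(i,j)\in\mathcal{M}$, $i\in N(\bar J)$, to $i$ at price $p$; and assign the items of $\bar J$ to buyers in $Q^p$ (respecting supply and budget constraints), each at price $p$. Otherwise run Procedure II: compute a maximum $B$-matching $\mathcal{M}$ of $G^{p+\epsilon}$; let $\bar J$ be the items unmatched in it and $N(\bar J)$ the buyers having an augmenting path to an item of $\bar J$; give each item $j$ with $(i,j)\in\mathcal{M}$, $i\in N(\bar J)$, to $i$ at price $p+\epsilon$;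 remove $\bar J$ from $J$; and remove all items no longer demanded by any buyer. *)

theory Defs
  imports Complex_Main
begin

text \<open>Buyers have type 'b, items have type 'j. An instance is given by a finite
buyer set I, a finite item set J0, preference sets S, values v and budgets b.\<close>

text \<open>State of Algorithm 1: currently unsold items, bundles X_i, payments p_i,
the price at which each sold item was sold, and the current auction price p.
The remaining budget of buyer i is b i - paid s i.\<close>

record ('b, 'j) auction_state =
  unsold :: "'j set"
  xbundle :: "'b \<Rightarrow> 'j set"
  paid   :: "'b \<Rightarrow> real"
  iprice :: "'j \<Rightarrow> real"
  cur    :: real

definition demand :: "('b \<Rightarrow> 'j set) \<Rightarrow> ('b \<Rightarrow> real) \<Rightarrow> ('b \<Rightarrow> real) \<Rightarrow> real \<Rightarrow> 'b \<Rightarrow> nat" where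
  "demand S v bud p i =
     (if 0 < p \<and> p \<le> v i then min (nat \<lfloor>bud i / p\<rfloor>) (card (S i)) else 0)"

definition rbud :: "('b \<Rightarrow> real) \<Rightarrow> ('b, 'j, 'z) auction_state_scheme \<Rightarrow> 'b \<Rightarrow> real" where
  "rbud b s i = b i - paid s i"

definition dem :: "('b \<Rightarrow> 'j set) \<Rightarrow> ('b \<Rightarrow> real) \<Rightarrow> ('b \<Rightarrow> real) \<Rightarrow> ('b, 'j, 'z) auction_state_scheme
     \<Rightarrow> real \<Rightarrow> 'b \<Rightarrow> nat" where
  "dem S v b s p = demand S v (rbud b s) p"

definition Abuy where
  "Abuy I S v b s p = {i \<in> I. p < v i \<and> 0 < dem S v b s p i}"
definition Qbuy where
  "Qbuy I S v b s p = {i \<in> I. v i = p \<and> 0 < dem S v b s p i}"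
definition Ibuy where
  "Ibuy I S v b s p = Abuy I S v b s p \<union> Qbuy I S v b s p"

definition bmatch :: "('b \<Rightarrow> 'j set) \<Rightarrow> 'b set \<Rightarrow> 'j set \<Rightarrow> ('b \<Rightarrow> nat) \<Rightarrow> ('b \<times> 'j) set \<Rightarrow> bool" where
  "bmatch S Bs Js d M \<longleftrightarrow>
     M \<subseteq> Bs \<times> Js \<and> (\<forall>(i, j) \<in> M. j \<in> S i) \<and>
     (\<forall>i. card {j. (i, j) \<in> M} \<le> d i) \<and>
     (\<forall>i i' j. (i, j) \<in> M \<longrightarrow> (i', j) \<in> M \<longrightarrow> i = i')"

definition msize :: "('b \<Rightarrow> 'j set) \<Rightarrow> 'b set \<Rightarrow> 'j set \<Rightarrow> ('b \<Rightarrow> nat) \<Rightarrow> nat" where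
  "msize S Bs Js d = Max (card ` {M. bmatch S Bs Js d M})"

definition max_bmatch :: "('b \<Rightarrow> 'j set) \<Rightarrow> 'b set \<Rightarrow> 'j set \<Rightarrow> ('b \<Rightarrow> nat) \<Rightarrow> ('b \<times> 'j) set \<Rightarrow> bool" where
  "max_bmatch S Bs Js d M \<longleftrightarrow> bmatch S Bs Js d M \<and> card M = msize S Bs Js d"

text \<open>Augmenting path i = y_1, z_1, ..., y_h, z_h = j w.r.t. M in the graph on Bs \<union> Js
  (indices shifted to start at 0).\<close>
definition aug_path :: "('b \<Rightarrow> 'j set) \<Rightarrow> 'b set \<Rightarrow> 'j set \<Rightarrow> ('b \<times> 'j) set \<Rightarrow> 'b \<Rightarrow> 'j \<Rightarrow> bool" where
  "aug_path S Bs Js M i j \<longleftrightarrow>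
     (\<exists>h::nat. \<exists>ys :: nat \<Rightarrow> 'b. \<exists>zs :: nat \<Rightarrow> 'j. 1 \<le> h \<and> ys 0 = i \<and> zs (h - 1) = j \<and>
        (\<forall>k<h. ys k \<in> Bs \<and> zs k \<in> Js \<and> zs k \<in> S (ys k) \<and> (ys k, zs k) \<notin> M) \<and>
        (\<forall>k. k + 1 < h \<longrightarrow> (ys (k + 1), zs k) \<in> M))"

definition give :: "('b, 'j, 'z) auction_state_scheme \<Rightarrow> ('b \<times> 'j) set \<Rightarrow> real
     \<Rightarrow> ('b, 'j, 'z) auction_state_scheme" where
  "give s M q = s\<lparr> unsold := unsold s - snd ` M,
                   xbundle := (\<lambda>i. xbundle s i \<union> {j. (i, j) \<in> M}),
                   paid := (\<lambda>i. paid s i + q * real (card {j. (i, j) \<in> M})),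
                   iprice := (\<lambda>j. if j \<in> snd ` M then q else iprice s j) \<rparr>"

definition gsize where
  "gsize I S v b s x = msize S (Ibuy I S v b s x) (unsold s) (dem S v b s x)"

definition critical where
  "critical I S v b s p \<longleftrightarrow> cur s \<le> p \<and> 0 < p \<and>
     (\<forall>q>p. gsize I S v b s q < gsize I S v b s p)"

definition is_critical_least where
  "is_critical_least I S v b s p \<longleftrightarrow> critical I S v b s p \<and>
     (\<forall>p'. critical I S v b s p' \<longrightarrow> p \<le> p')"

inductive alg_step :: "'b set \<Rightarrow> ('b \<Rightarrow> 'j set) \<Rightarrow> ('b \<Rightarrow> real) \<Rightarrow> ('b \<Rightarrow> real) \<Rightarrow> real
    \<Rightarrow> ('b, 'j) auction_state \<Rightarrow> ('b, 'j) auction_state \<Rightarrow> bool"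
  for I S v b and eps :: real where
  procI: "\<lbrakk> is_critical_least I S v b s p;
            gsize I S v b s p > msize S (Abuy I S v b s p) (unsold s) (dem S v b s p);
            JQ = \<Union> (S ` Qbuy I S v b s p);
            max_bmatch S (Abuy I S v b s p) (unsold s) (dem S v b s p) M;
            \<forall>M'. max_bmatch S (Abuy I S v b s p) (unsold s) (dem S v b s p) M' \<longrightarrow>
                  card (snd ` M \<inter> JQ) \<le> card (snd ` M' \<inter> JQ);
            Jbar = unsold s - snd ` M;
            M1 = {(i, j) \<in> M. \<exists>j' \<in> Jbar. aug_path S (Abuy I S v b s p) (unsold s) M i j'};
            max_bmatch S (Qbuy I S v b s p) Jbar (dem S v b s p) M2;
            s' = give (s\<lparr>cur := p\<rparr>) (M1 \<union> M2) p \<rbrakk>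
          \<Longrightarrow> alg_step I S v b eps s s'"
| procII: "\<lbrakk> is_critical_least I S v b s p;
            \<not> gsize I S v b s p > msize S (Abuy I S v b s p) (unsold s) (dem S v b s p);
            q = p + eps;
            max_bmatch S (Ibuy I S v b s q) (unsold s) (dem S v b s q) M;
            Jbar = unsold s - snd ` M;
            M1 = {(i, j) \<in> M. \<exists>j' \<in> Jbar. aug_path S (Ibuy I S v b s q) (unsold s) M i j'};
            s1 = give (s\<lparr>cur := p\<rparr>) M1 q;
            s' = s1\<lparr>unsold := {j \<in> unsold s1 - Jbar. \<exists>i \<in> I. j \<in> S i \<and> 0 < dem S v b s1 q i}\<rparr> \<rbrakk>
          \<Longrightarrow> alg_step I S v b eps s s'"

definition init_state :: "'j set \<Rightarrow> ('b, 'j) auction_state" where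
  "init_state J0 = \<lparr>unsold = J0, xbundle = (\<lambda>_. {}), paid = (\<lambda>_. 0), iprice = (\<lambda>_. 0), cur = 0\<rparr>"

text \<open>The loop stops when no critical price is reached any more
  (i.e. the maximum B-matching at the current price level is empty).\<close>
definition final_state where
  "final_state I S v b s \<longleftrightarrow> \<not> (\<exists>p. critical I S v b s p)"

definition alg_outcome where
  "alg_outcome I J0 S v b eps s \<longleftrightarrow>
     (alg_step I S v b eps)\<^sup>*\<^sup>* (init_state J0) s \<and> final_state I S v b s"

end

theory Submission
  imports Defs
begin

text \<open>A buyer who receives items in some round is matched, in a maximum B-matching, along an
augmenting path to an unmatched item; hence she is saturated: she gets every unsold item she
still wants, or so many items that her remaining budget drops below the current price. As prices
only increase, she never buys again, except in Procedure I at a price equal to her value, which is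
then also the price she paid before. In Procedure II the items are sold at p + \<epsilon> and the budget
only drops below p + \<epsilon>; since critical prices lie in the finite set of breakpoints v_i and b_i/m,
a small enough \<epsilon> forces it below p as well.\<close>

section \<open>Augmenting paths in B-matchings\<close>

definition aug_seq :: "('b \<Rightarrow> 'j set) \<Rightarrow> 'b set \<Rightarrow> 'j set \<Rightarrow> ('b \<times> 'j) set \<Rightarrow> 'b \<Rightarrow> 'j
    \<Rightarrow> nat \<Rightarrow> (nat \<Rightarrow> 'b) \<Rightarrow> (nat \<Rightarrow> 'j) \<Rightarrow> bool" where
  "aug_seq S Bs Js M i j h ys zs \<longleftrightarrow> 1 \<le> h \<and> ys 0 = i \<and> zs (h - 1) = j \<and>
     (\<forall>k<h. ys k \<in> Bs \<and> zs k \<in> Js \<and> zs k \<in> S (ys k) \<and> (ys k, zs k) \<notin> M) \<and>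
     (\<forall>k. k + 1 < h \<longrightarrow> (ys (k + 1), zs k) \<in> M)"

lemma aug_path_iff_aug_seq: "aug_path S Bs Js M i j \<longleftrightarrow> (\<exists>h ys zs. aug_seq S Bs Js M i j h ys zs)"
  unfolding aug_path_def aug_seq_def by auto

lemma aug_seq_shortcut:
  assumes P: "aug_seq S Bs Js M i j h ys zs" and ab: "a < b" "b < h"
    and edge: "zs b \<in> S (ys a)" "(ys a, zs b) \<notin> M"
  shows "aug_seq S Bs Js M i j (h - (b - a))
           (\<lambda>k. if k \<le> a then ys k else ys (k + (b - a))) (\<lambda>k. if k < a then zs k else zs (k + (b - a)))"
proof -
  have p1: "1 \<le> h" "ys 0 = i" "zs (h - 1) = j"
    and p2: "\<And>k. k < h \<Longrightarrow> ys k \<in> Bs \<and> zs k \<in> Js \<and> zs k \<in> S (ys k) \<and> (ys k, zs k) \<notin> M"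
    and p3: "\<And>k. k + 1 < h \<Longrightarrow> (ys (k + 1), zs k) \<in> M"
    using P unfolding aug_seq_def by auto
  have "h - (b - a) - 1 + (b - a) = h - 1" using ab by auto
  moreover have "(ys (Suc k), zs k) \<in> M" if "k < a" for k using p3[of k] that ab by auto
  moreover have "(ys (Suc (k + b - a)), zs (k + b - a)) \<in> M" if "Suc k < h + a - b" for k
    using p3[of "k + b - a"] that ab by auto
  ultimately show ?thesis
    using ab p1 p2[of a] p2[of b] edge unfolding aug_seq_def by (auto simp: p2 not_le not_less)
qed

lemma aug_seq_simple:
  assumes "aug_seq S Bs Js M i j h0 ys0 zs0"
  obtains h ys zs where "aug_seq S Bs Js M i j h ys zs" "inj_on ys {..<h}" "inj_on zs {..<h}"
proof -
  obtain h where "\<exists>ys zs. aug_seq S Bs Js M i j h ys zs"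
    and shortest: "\<And>h'. h' < h \<Longrightarrow> \<not> (\<exists>ys zs. aug_seq S Bs Js M i j h' ys zs)"
    using assms exists_least_iff[of "\<lambda>h. \<exists>ys zs. aug_seq S Bs Js M i j h ys zs"] by blast
  then obtain ys zs where P: "aug_seq S Bs Js M i j h ys zs" by blast
  have no_repeat: False if "a < b" "b < h" "ys a = ys b \<or> zs a = zs b" for a b
  proof -
    have "zs b \<in> S (ys a)" "(ys a, zs b) \<notin> M"
      using that P unfolding aug_seq_def by (metis less_trans)+
    from aug_seq_shortcut[OF P that(1,2) this] shortest[of "h - (b - a)"] that(1,2)
    show False by auto
  qed
  have "inj_on ys {..<h}" "inj_on zs {..<h}"
    by (auto intro!: inj_onI) (metis linorder_neqE_nat no_repeat)+
  with P show thesis by (rule that)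
qed

definition augment :: "('b \<times> 'j) set \<Rightarrow> nat \<Rightarrow> (nat \<Rightarrow> 'b) \<Rightarrow> (nat \<Rightarrow> 'j) \<Rightarrow> ('b \<times> 'j) set" where
  "augment M h ys zs = (M - (\<lambda>k. (ys (Suc k), zs k)) ` {..<h - 1}) \<union> (\<lambda>k. (ys k, zs k)) ` {..<h}"

lemma card_augment:
  assumes P: "aug_seq S Bs Js M i j h ys zs" and inj: "inj_on zs {..<h}" and "finite M"
  shows "card (augment M h ys zs) = card M + 1"
proof -
  define R where "R = (\<lambda>k. (ys (Suc k), zs k)) ` {..<h - 1}"
  define A where "A = (\<lambda>k. (ys k, zs k)) ` {..<h}"
  have "R \<subseteq> M" "A \<inter> M = {}" "1 \<le> h"
    using P unfolding aug_seq_def R_def A_def by auto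
  moreover have "card R = h - 1" "card A = h"
    unfolding R_def A_def using inj by (auto simp: card_image inj_on_def)
  ultimately show ?thesis
    using \<open>finite M\<close> card_Diff_subset[of R M] card_mono[of M R]
      card_Un_disjoint[of "M - R" A] finite_subset[of R M]
    unfolding augment_def R_def[symmetric] A_def[symmetric] by (auto simp: A_def)
qed

lemma augment_item_unique:
  assumes P: "aug_seq S Bs Js M i j h ys zs" and inj: "inj_on zs {..<h}"
    and bm: "bmatch S Bs Js d M" and free: "j \<notin> snd ` M"
    and xy: "(x, y) \<in> augment M h ys zs" "(x', y) \<in> augment M h ys zs"
  shows "x = x'"
proof -
  have p1: "1 \<le> h" "zs (h - 1) = j" and p3: "\<And>k. k + 1 < h \<Longrightarrow> (ys (k + 1), zs k) \<in> M"
    using P unfolding aug_seq_def by auto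
  have uniq: "\<And>x x' y. (x, y) \<in> M \<Longrightarrow> (x', y) \<in> M \<Longrightarrow> x = x'"
    using bm unfolding bmatch_def by blast
  have old_new: "x = x'" if old: "(x, y) \<in> M" "(x, y) \<notin> (\<lambda>k. (ys (Suc k), zs k)) ` {..<h - 1}"
    and new: "(x', y) \<in> (\<lambda>k. (ys k, zs k)) ` {..<h}" for x x'
  proof -
    obtain k where k: "k < h" "x' = ys k" "y = zs k" using new by auto
    show ?thesis
    proof (cases "k + 1 < h")
      case True
      with old k p3[of k] uniq[of x y "ys (k + 1)"] show ?thesis by auto
    next
      case False
      then have "k = h - 1" using k by auto
      then have "y = j" using k p1 by auto
      with old(1) free show ?thesis by force
    qed
  qed
  have new_new: "x = x'" if "(x, y) \<in> (\<lambda>k. (ys k, zs k)) ` {..<h}" "(x', y) \<in> (\<lambda>k. (ys k, zs k)) ` {..<h}"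
    for x x'
    using that inj by (auto simp: inj_on_def)
  from xy show ?thesis
    unfolding augment_def using uniq[of x y x'] old_new[of x x'] old_new[of x' x] new_new[of x x'] by blast
qed

lemma card_le_Suc_if_subset_insert:
  assumes "finite E" "X \<subseteq> insert z E"
  shows "card X \<le> Suc (card E)"
proof -
  have "card X \<le> card (insert z E)" using assms by (simp add: card_mono)
  also have "\<dots> \<le> Suc (card E)" using assms(1) by (simp add: card_insert_if)
  finally show ?thesis .
qed

lemma augment_degree_le:
  assumes P: "aug_seq S Bs Js M i j h ys zs" and inj: "inj_on ys {..<h}"
    and bm: "bmatch S Bs Js d M" and "finite M" and room: "card {y. (i, y) \<in> M} < d i"
  shows "card {y. (x, y) \<in> augment M h ys zs} \<le> d x"
proof -
  have deg: "\<And>x. card {y. (x, y) \<in> M} \<le> d x" using bm unfolding bmatch_def by blast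
  have p1: "1 \<le> h" "ys 0 = i" and p3: "\<And>k. k + 1 < h \<Longrightarrow> (ys (k + 1), zs k) \<in> M"
    using P unfolding aug_seq_def by auto
  define E where "E = {y. (x, y) \<in> M}"
  have "E \<subseteq> snd ` M" unfolding E_def by force
  then have "finite E" using \<open>finite M\<close> finite_subset by blast
  show ?thesis
  proof (cases "x \<in> ys ` {..<h}")
    case False
    then have "{y. (x, y) \<in> augment M h ys zs} \<subseteq> E" unfolding augment_def E_def by auto
    then show ?thesis using card_mono[OF \<open>finite E\<close>] deg[of x] unfolding E_def by (meson order.trans)
  next
    case True
    then obtain a where a: "a < h" "x = ys a" by auto
    have new: "{y. (x, y) \<in> (\<lambda>k. (ys k, zs k)) ` {..<h}} = {zs a}"
      using a inj by (auto simp: inj_on_def)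
    show ?thesis
    proof (cases "a = 0")
      case True
      then have "{y. (x, y) \<in> augment M h ys zs} \<subseteq> insert (zs a) E"
        using new unfolding augment_def E_def by auto
      then have "card {y. (x, y) \<in> augment M h ys zs} \<le> Suc (card E)"
        using \<open>finite E\<close> by (rule card_le_Suc_if_subset_insert[rotated])
      then show ?thesis using room a True p1 unfolding E_def by auto
    next
      case False
      then have lost: "(x, zs (a - 1)) \<in> (\<lambda>k. (ys (Suc k), zs k)) ` {..<h - 1}" "zs (a - 1) \<in> E"
        using a p3[of "a - 1"] unfolding E_def by (auto intro!: image_eqI[of _ _ "a - 1"])
      then have "{y. (x, y) \<in> augment M h ys zs} \<subseteq> insert (zs a) (E - {zs (a - 1)})"
        using new unfolding augment_def E_def by auto
      then have "card {y. (x, y) \<in> augment M h ys zs} \<le> Suc (card (E - {zs (a - 1)}))"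
        using \<open>finite E\<close> by (intro card_le_Suc_if_subset_insert) auto
      also have "\<dots> = card E" using lost(2) \<open>finite E\<close> by (intro card_Suc_Diff1)
      finally show ?thesis using deg[of x] unfolding E_def by auto
    qed
  qed
qed

lemma bmatch_edge: "bmatch S Bs Js d M \<Longrightarrow> (i, j) \<in> M \<Longrightarrow> i \<in> Bs \<and> j \<in> Js \<and> j \<in> S i"
  unfolding bmatch_def by blast

lemma finite_bmatch:
  assumes "finite Bs" "finite Js" "bmatch S Bs Js d M"
  shows "finite M"
  using assms finite_subset[of M "Bs \<times> Js"] unfolding bmatch_def by blast

lemma card_le_msize:
  assumes "finite Bs" "finite Js" "bmatch S Bs Js d M"
  shows "card M \<le> msize S Bs Js d"
proof -
  have "{M. bmatch S Bs Js d M} \<subseteq> Pow (Bs \<times> Js)" unfolding bmatch_def by auto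
  then have "finite {M. bmatch S Bs Js d M}" using assms(1,2) by (meson finite_Pow_iff finite_SigmaI rev_finite_subset)
  then show ?thesis unfolding msize_def using assms(3) by auto
qed

lemma bmatch_augment:
  assumes bm: "bmatch S Bs Js d M" and fin: "finite Bs" "finite Js"
    and P: "aug_seq S Bs Js M i j h ys zs" and inj: "inj_on ys {..<h}" "inj_on zs {..<h}"
    and room: "card {y. (i, y) \<in> M} < d i" and free: "j \<notin> snd ` M"
  shows "bmatch S Bs Js d (augment M h ys zs)"
proof -
  have "finite M" using finite_bmatch[OF fin bm] .
  have "augment M h ys zs \<subseteq> Bs \<times> Js" "\<forall>(x, y) \<in> augment M h ys zs. y \<in> S x"
    using bm P unfolding bmatch_def aug_seq_def augment_def by auto
  then show ?thesis
    unfolding bmatch_def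
    using augment_degree_le[OF P inj(1) bm \<open>finite M\<close> room]
      augment_item_unique[OF P inj(2) bm free] by blast
qed

lemma max_bmatch_aug_path_saturated:
  assumes mx: "max_bmatch S Bs Js d M" and fin: "finite Bs" "finite Js"
    and ap: "aug_path S Bs Js M i j" and free: "j \<notin> snd ` M"
  shows "card {y. (i, y) \<in> M} = d i"
proof (rule ccontr)
  have bm: "bmatch S Bs Js d M" and size: "card M = msize S Bs Js d"
    using mx unfolding max_bmatch_def by auto
  assume "card {y. (i, y) \<in> M} \<noteq> d i"
  moreover have "card {y. (i, y) \<in> M} \<le> d i" using bm unfolding bmatch_def by blast
  ultimately have room: "card {y. (i, y) \<in> M} < d i" by simp
  obtain h0 ys0 zs0 where "aug_seq S Bs Js M i j h0 ys0 zs0"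
    using ap unfolding aug_path_iff_aug_seq by blast
  then obtain h ys zs where P: "aug_seq S Bs Js M i j h ys zs" and inj: "inj_on ys {..<h}" "inj_on zs {..<h}"
    by (rule aug_seq_simple)
  have "card (augment M h ys zs) \<le> msize S Bs Js d"
    using card_le_msize[OF fin bmatch_augment[OF bm fin P inj room free]] .
  then show False using card_augment[OF P inj(2) finite_bmatch[OF fin bm]] size by simp
qed

text \<open>The edges of M at the buyers N(J) of Procedures I and II, J being the unmatched items.\<close>

definition aug_part :: "('b \<Rightarrow> 'j set) \<Rightarrow> 'b set \<Rightarrow> 'j set \<Rightarrow> ('b \<times> 'j) set \<Rightarrow> ('b \<times> 'j) set" where
  "aug_part S Bs Js M = {(i, j) \<in> M. \<exists>j' \<in> Js - snd ` M. aug_path S Bs Js M i j'}"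

lemma aug_part_subset: "max_bmatch S Bs Js d M \<Longrightarrow> aug_part S Bs Js M \<subseteq> Bs \<times> Js"
  unfolding aug_part_def max_bmatch_def bmatch_def by blast

lemma aug_part_saturated:
  assumes mx: "max_bmatch S Bs Js d M" and fin: "finite Bs" "finite Js"
    and ij: "(i, j) \<in> aug_part S Bs Js M"
  shows "{y. (i, y) \<in> aug_part S Bs Js M} = {y. (i, y) \<in> M}" "card {y. (i, y) \<in> M} = d i"
proof -
  obtain j' where j': "j' \<in> Js - snd ` M" "aug_path S Bs Js M i j'"
    using ij unfolding aug_part_def by blast
  then show "{y. (i, y) \<in> aug_part S Bs Js M} = {y. (i, y) \<in> M}"
    unfolding aug_part_def by blast
  from j' show "card {y. (i, y) \<in> M} = d i"
    using max_bmatch_aug_path_saturated[OF mx fin] by blast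
qed

lemma bmatch_cong_on:
  assumes "B1 \<subseteq> I" and agree: "\<forall>i\<in>I. S i \<inter> U \<noteq> {} \<longrightarrow> (i \<in> B1 \<longleftrightarrow> i \<in> B2) \<and> d1 i = d2 i"
    and bm: "bmatch S B1 U d1 M"
  shows "bmatch S B2 U d2 M"
proof -
  have rel: "i \<in> I \<and> S i \<inter> U \<noteq> {}" if "(i, j) \<in> M" for i j
    using bm that \<open>B1 \<subseteq> I\<close> unfolding bmatch_def by blast
  have "M \<subseteq> B2 \<times> U" using bm rel agree unfolding bmatch_def by fastforce
  moreover have "card {j. (i, j) \<in> M} \<le> d2 i" for i
  proof (cases "\<exists>j. (i, j) \<in> M")
    case True
    then have "d1 i = d2 i" using rel agree by blast
    then show ?thesis using bm unfolding bmatch_def by metis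
  qed simp
  ultimately show ?thesis using bm unfolding bmatch_def by blast
qed

section \<open>Demand and price breakpoints\<close>

lemma demand_eq_0_if_budget_less: "0 < x \<Longrightarrow> bud i < x \<Longrightarrow> demand S v bud x i = 0"
  by (simp add: demand_def floor_less_iff divide_less_eq)

lemma dem_pos_imp: "0 < dem S v b s x i \<Longrightarrow> 0 < x \<and> x \<le> v i"
  by (simp add: dem_def demand_def split: if_splits)

lemma dem_if_unspent: "paid s i = 0 \<Longrightarrow> dem S v b s x i = demand S v b x i"
  by (simp add: dem_def demand_def rbud_def)

lemma Ibuy_eq: "Ibuy I S v b s x = {i \<in> I. 0 < dem S v b s x i}"
proof -
  have "0 < dem S v b s x i \<Longrightarrow> x \<le> v i" for i
    using dem_pos_imp[of S v b s x i] by simp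
  then show ?thesis unfolding Ibuy_def Abuy_def Qbuy_def by (auto simp: le_less)
qed

lemma less_Suc_floor_div_mult:
  assumes "0 < p" "0 \<le> y"
  shows "y < (real (nat \<lfloor>y / p\<rfloor>) + 1) * p"
proof -
  have "y / p < real_of_int \<lfloor>y / p\<rfloor> + 1" by linarith
  then have "y < (real_of_int \<lfloor>y / p\<rfloor> + 1) * p" using pos_divide_less_eq[OF assms(1)] by blast
  moreover have "real (nat \<lfloor>y / p\<rfloor>) = real_of_int \<lfloor>y / p\<rfloor>" using assms by simp
  ultimately show ?thesis by simp
qed

lemma mult_le_if_le_floor_div:
  assumes "0 < p" "1 \<le> m" "m \<le> nat \<lfloor>y / p\<rfloor>"
  shows "real m * p \<le> y"
proof -
  have "real m \<le> y / p" using assms(2,3) by linarith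
  then show ?thesis using assms(1) by (simp add: le_divide_eq)
qed

lemma saturated_demand_exhausts:
  assumes card: "card G = demand S v b x i" and "G \<subseteq> S i" "finite (S i)" "0 < x" "x \<le> v i" "0 \<le> b i"
  shows "S i \<subseteq> G \<or> b i - x * real (card G) < x"
proof (cases "nat \<lfloor>b i / x\<rfloor> \<le> card (S i)")
  case True
  then have "card G = nat \<lfloor>b i / x\<rfloor>" using card assms(4,5) by (simp add: demand_def)
  then show ?thesis using less_Suc_floor_div_mult[of x "b i"] assms(4,6) by (simp add: algebra_simps)
next
  case False
  then have "card G = card (S i)" using card assms(4,5) by (simp add: demand_def)
  then show ?thesis using card_subset_eq[OF assms(3,2)] by simp
qed

text \<open>With full budget, the demand of buyer i can change only at v_i and at the prices b_i/m;
consequently all critical prices lie in this set.\<close>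

definition price_breakpoints :: "'b set \<Rightarrow> ('b \<Rightarrow> real) \<Rightarrow> ('b \<Rightarrow> real) \<Rightarrow> nat \<Rightarrow> real set" where
  "price_breakpoints I v b N = v ` I \<union> (\<lambda>(i, m). b i / real m) ` (I \<times> {1..N})"

text \<open>Admissible increments: a buyer who spends her budget b_i on k items at price p + \<epsilon>, with p a
breakpoint, keeps less than p (\<open>budget_below_breakpoint\<close>). The element 1 keeps the set nonempty.\<close>

definition eps_bound :: "'b set \<Rightarrow> ('b \<Rightarrow> real) \<Rightarrow> ('b \<Rightarrow> real) \<Rightarrow> nat \<Rightarrow> real" where
  "eps_bound I v b N = Min (insert 1 {x \<in> (\<lambda>(i, p, k). (b i - real (Suc k) * p) / real (Suc k)) `
                                     (I \<times> price_breakpoints I v b N \<times> {1..N}). 0 < x})"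

lemma finite_price_breakpoints: "finite I \<Longrightarrow> finite (price_breakpoints I v b N)"
  unfolding price_breakpoints_def by auto

lemma eps_bound_pos: "finite I \<Longrightarrow> 0 < eps_bound I v b N"
  unfolding eps_bound_def using finite_price_breakpoints[of I v b N] by (subst Min_gr_iff) auto

lemma budget_below_breakpoint:
  assumes "finite I" "i \<in> I" "p \<in> price_breakpoints I v b N" "1 \<le> k" "k \<le> N"
    and eps: "0 < eps" "eps < eps_bound I v b N"
    and left: "b i - (p + eps) * real k < p + eps"
  shows "b i - (p + eps) * real k < p"
proof (rule ccontr)
  assume "\<not> ?thesis"
  moreover have "0 < eps * real k" using assms(4) eps(1) by simp
  ultimately have "0 < b i - real (Suc k) * p" by (simp add: algebra_simps)
  then have "eps_bound I v b N \<le> (b i - real (Suc k) * p) / real (Suc k)"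
    unfolding eps_bound_def using assms(1-5) finite_price_breakpoints[OF assms(1)]
    by (intro Min_le) (auto intro!: image_eqI[of _ _ "(i, p, k)"])
  with eps(2) have "eps < (b i - real (Suc k) * p) / real (Suc k)" by simp
  then have "real (Suc k) * eps < b i - real (Suc k) * p"
    by (simp add: less_divide_eq mult.commute del: of_nat_Suc)
  then show False using left by (simp add: algebra_simps)
qed

lemma demand_const_between_breakpoints:
  assumes P: "p \<notin> price_breakpoints I v b N" and i: "i \<in> I" "0 \<le> b i" "card (S i) \<le> N"
    and pq: "0 < p" "p < q" and gap: "\<forall>x\<in>price_breakpoints I v b N. p < x \<longrightarrow> q \<le> x"
  shows "demand S v b p i = demand S v b q i"
proof -
  have vP: "v i \<in> price_breakpoints I v b N" unfolding price_breakpoints_def using i by auto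
  show ?thesis
  proof (cases "v i < p")
    case True then show ?thesis using pq by (simp add: demand_def)
  next
    case False
    then have "p < v i" using vP P by (cases "v i = p") auto
    then have "q \<le> v i" using gap vP by auto
    have "nat \<lfloor>b i / q\<rfloor> \<le> nat \<lfloor>b i / p\<rfloor>"
      using pq i(2) by (intro nat_mono floor_mono) (simp add: frac_le)
    moreover define m where "m = min (nat \<lfloor>b i / p\<rfloor>) (card (S i))"
    moreover have "\<not> min (nat \<lfloor>b i / q\<rfloor>) (card (S i)) < m"
    proof
      assume lt: "min (nat \<lfloor>b i / q\<rfloor>) (card (S i)) < m"
      then have m1: "1 \<le> m" "m \<le> card (S i)" "m \<le> nat \<lfloor>b i / p\<rfloor>" "nat \<lfloor>b i / q\<rfloor> < m"
        using m_def by auto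
      have "real m * p \<le> b i" using mult_le_if_le_floor_div[OF pq(1) m1(1,3)] .
      moreover have "b i < (real (nat \<lfloor>b i / q\<rfloor>) + 1) * q"
        using less_Suc_floor_div_mult pq i(2) by auto
      moreover have "\<dots> \<le> real m * q" using m1(4) pq by (intro mult_right_mono) auto
      ultimately have "p \<le> b i / real m" "b i / real m < q" using m1(1)
        by (auto simp: le_divide_eq divide_less_eq mult.commute)
      moreover have "b i / real m \<in> price_breakpoints I v b N"
        unfolding price_breakpoints_def using i m1 by (auto intro!: image_eqI[of _ _ "(i, m)"])
      ultimately show False using P gap by (cases "b i / real m = p") auto
    qed
    ultimately have "min (nat \<lfloor>b i / p\<rfloor>) (card (S i)) = min (nat \<lfloor>b i / q\<rfloor>) (card (S i))"
      by linarith
    then show ?thesis using pq \<open>p < v i\<close> \<open>q \<le> v i\<close> by (simp add: demand_def)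
  qed
qed

section \<open>The single-price invariant\<close>

definition bought_at :: "('b, 'j) auction_state \<Rightarrow> 'b \<Rightarrow> real \<Rightarrow> bool" where
  "bought_at s i r \<longleftrightarrow> (\<forall>j\<in>xbundle s i. iprice s j = r) \<and> paid s i = r * real (card (xbundle s i))"

text \<open>The third alternative covers the buyers of Q^p in Procedure I, who may still receive items,
but only at their value, which is also the price of the items they already hold.\<close>

definition withdrawn :: "('b \<Rightarrow> 'j set) \<Rightarrow> ('b \<Rightarrow> real) \<Rightarrow> ('b \<Rightarrow> real) \<Rightarrow> ('b, 'j) auction_state
    \<Rightarrow> 'b \<Rightarrow> real \<Rightarrow> bool" where
  "withdrawn S v b s i r \<longleftrightarrow> S i \<inter> unsold s = {} \<or> b i - paid s i < cur s \<or> (v i \<le> cur s \<and> r = v i)"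

definition auction_inv :: "'b set \<Rightarrow> 'j set \<Rightarrow> ('b \<Rightarrow> 'j set) \<Rightarrow> ('b \<Rightarrow> real) \<Rightarrow> ('b \<Rightarrow> real)
    \<Rightarrow> ('b, 'j) auction_state \<Rightarrow> bool" where
  "auction_inv I J0 S v b s \<longleftrightarrow> unsold s \<subseteq> J0 \<and>
     (\<forall>i. xbundle s i \<inter> unsold s = {} \<and> finite (xbundle s i)) \<and>
     (cur s = 0 \<or> cur s \<in> price_breakpoints I v b (card J0)) \<and>
     (\<forall>i\<in>I. \<exists>r. bought_at s i r \<and> (xbundle s i \<noteq> {} \<longrightarrow> withdrawn S v b s i r))"

lemma auction_inv_init: "auction_inv I J0 S v b (init_state J0)"
  unfolding auction_inv_def init_state_def bought_at_def by auto

lemma finite_unsold: "auction_inv I J0 S v b s \<Longrightarrow> finite J0 \<Longrightarrow> finite (unsold s)"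
  unfolding auction_inv_def using finite_subset by blast

lemma bought_at_empty_unspent: "bought_at s i r \<Longrightarrow> xbundle s i = {} \<Longrightarrow> paid s i = 0"
  unfolding bought_at_def by simp

lemma withdrawn_demand:
  assumes "withdrawn S v b s i r" "j \<in> S i \<inter> unsold s" "cur s \<le> x" "0 < dem S v b s x i"
  shows "x = cur s \<and> x = v i \<and> r = v i"
proof -
  have x: "0 < x" "x \<le> v i" using dem_pos_imp[OF assms(4)] by auto
  then have "\<not> rbud b s i < x"
    using assms(4) demand_eq_0_if_budget_less[of x "rbud b s" i S v] unfolding dem_def by auto
  then show ?thesis using assms(1-3) x unfolding withdrawn_def rbud_def by auto
qed

lemma give_simps:
  "unsold ((give s N q)\<lparr>unsold := U\<rparr>) = U"
  "xbundle ((give s N q)\<lparr>unsold := U\<rparr>) i = xbundle s i \<union> {j. (i, j) \<in> N}"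
  "paid ((give s N q)\<lparr>unsold := U\<rparr>) i = paid s i + q * real (card {j. (i, j) \<in> N})"
  "iprice ((give s N q)\<lparr>unsold := U\<rparr>) j = (if j \<in> snd ` N then q else iprice s j)"
  "cur ((give s N q)\<lparr>unsold := U\<rparr>) = cur s"
  unfolding give_def by auto

lemma give_unsold_idem: "(give s N q)\<lparr>unsold := unsold s - snd ` N\<rparr> = give s N q"
  unfolding give_def by simp

lemma give_buyer_inv:
  assumes old: "bought_at s i r" "xbundle s i \<noteq> {} \<longrightarrow> withdrawn S v b s i r"
    and disj: "xbundle s i \<inter> snd ` N = {}" and fin: "finite (xbundle s i)" "finite {j. (i, j) \<in> N}"
    and U: "U \<subseteq> unsold s - snd ` N" and c': "cur s \<le> c'"
    and new: "{j. (i, j) \<in> N} \<noteq> {} \<Longrightarrow> (\<forall>j\<in>xbundle s i. iprice s j = q) \<and>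
       (S i \<inter> unsold s \<subseteq> {j. (i, j) \<in> N} \<or> b i - (paid s i + q * real (card {j. (i, j) \<in> N})) < c' \<or>
        (v i \<le> c' \<and> q = v i))"
  defines "s' \<equiv> (give (s\<lparr>cur := c'\<rparr>) N q)\<lparr>unsold := U\<rparr>"
  shows "\<exists>r'. bought_at s' i r' \<and> (xbundle s' i \<noteq> {} \<longrightarrow> withdrawn S v b s' i r')"
proof (cases "{j. (i, j) \<in> N} = {}")
  case True
  then have "xbundle s' i = xbundle s i" "paid s' i = paid s i" "\<forall>j\<in>xbundle s i. iprice s' j = iprice s j"
    using disj unfolding s'_def give_simps by auto
  moreover have "unsold s' \<subseteq> unsold s" "cur s' = c'" using U unfolding s'_def give_simps by auto
  ultimately show ?thesis
    using old c' unfolding bought_at_def withdrawn_def by (intro exI[of _ r]) auto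
next
  case False
  define G where "G = {j. (i, j) \<in> N}"
  have old_q: "\<forall>j\<in>xbundle s i. iprice s j = q" and exhausted:
    "S i \<inter> unsold s \<subseteq> G \<or> b i - (paid s i + q * real (card G)) < c' \<or> (v i \<le> c' \<and> q = v i)"
    using new[OF False] unfolding G_def by auto
  have "paid s i = q * real (card (xbundle s i))"
    using old(1) old_q unfolding bought_at_def by (cases "xbundle s i = {}") auto
  moreover have "G \<subseteq> snd ` N" unfolding G_def by force
  moreover have "card (xbundle s i \<union> G) = card (xbundle s i) + card G"
    using disj fin unfolding G_def by (intro card_Un_disjoint) force+
  ultimately have "bought_at s' i q"
    using old_q disj unfolding bought_at_def s'_def give_simps G_def[symmetric]
    by (auto simp: algebra_simps)
  moreover have "S i \<inter> unsold s \<subseteq> G \<Longrightarrow> S i \<inter> U = {}" using U \<open>G \<subseteq> snd ` N\<close> by blast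
  then have "withdrawn S v b s' i q"
    using exhausted unfolding withdrawn_def s'_def give_simps G_def[symmetric] by (simp; blast)
  ultimately show ?thesis by blast
qed

lemma give_preserves_inv:
  assumes "finite J0" and inv: "auction_inv I J0 S v b s"
    and c': "cur s \<le> c'" "c' \<in> price_breakpoints I v b (card J0)"
    and N: "N \<subseteq> I \<times> unsold s" and U: "U \<subseteq> unsold s - snd ` N"
    and new: "\<And>i. i \<in> I \<Longrightarrow> {j. (i, j) \<in> N} \<noteq> {} \<Longrightarrow> (\<forall>j\<in>xbundle s i. iprice s j = q) \<and>
       (S i \<inter> unsold s \<subseteq> {j. (i, j) \<in> N} \<or> b i - (paid s i + q * real (card {j. (i, j) \<in> N})) < c' \<or>
        (v i \<le> c' \<and> q = v i))"
  shows "auction_inv I J0 S v b ((give (s\<lparr>cur := c'\<rparr>) N q)\<lparr>unsold := U\<rparr>)"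
proof -
  have fin_unsold: "finite (unsold s)" using finite_unsold[OF inv \<open>finite J0\<close>] .
  have items: "{j. (i, j) \<in> N} \<subseteq> unsold s" "snd ` N \<subseteq> unsold s" "finite (xbundle s i)" for i
    using N inv unfolding auction_inv_def by auto
  have disj: "xbundle s i \<inter> snd ` N = {}" for i
    using items(2) inv unfolding auction_inv_def by blast
  have "\<exists>r'. bought_at ((give (s\<lparr>cur := c'\<rparr>) N q)\<lparr>unsold := U\<rparr>) i r' \<and>
      (xbundle ((give (s\<lparr>cur := c'\<rparr>) N q)\<lparr>unsold := U\<rparr>) i \<noteq> {} \<longrightarrow>
       withdrawn S v b ((give (s\<lparr>cur := c'\<rparr>) N q)\<lparr>unsold := U\<rparr>) i r')" if "i \<in> I" for i
  proof -
    obtain r where "bought_at s i r" "xbundle s i \<noteq> {} \<longrightarrow> withdrawn S v b s i r"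
      using inv \<open>i \<in> I\<close> unfolding auction_inv_def by blast
    from give_buyer_inv[OF this disj[of i] items(3) finite_subset[OF items(1) fin_unsold] U c'(1)
        new[OF \<open>i \<in> I\<close>]]
    show ?thesis .
  qed
  moreover have "U \<subseteq> J0" using inv U unfolding auction_inv_def by blast
  moreover have "(xbundle s i \<union> {j. (i, j) \<in> N}) \<inter> U = {}" for i
  proof -
    have "xbundle s i \<inter> unsold s = {}" using inv unfolding auction_inv_def by blast
    moreover have "{j. (i, j) \<in> N} \<subseteq> snd ` N" by force
    ultimately show ?thesis using U by blast
  qed
  moreover have "finite (xbundle s i \<union> {j. (i, j) \<in> N})" for i
    using items(3) finite_subset[OF items(1) fin_unsold] by blast
  ultimately show ?thesis
    using c'(2) unfolding auction_inv_def give_simps by simp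
qed

lemma gsize_eq_if_dem_agree:
  assumes "\<forall>i\<in>I. S i \<inter> unsold s \<noteq> {} \<longrightarrow> dem S v b s p i = dem S v b s q i"
  shows "gsize I S v b s p = gsize I S v b s q"
proof -
  have "Ibuy I S v b s p \<subseteq> I" "Ibuy I S v b s q \<subseteq> I" by (auto simp: Ibuy_eq)
  moreover have "\<forall>i\<in>I. S i \<inter> unsold s \<noteq> {} \<longrightarrow>
      (i \<in> Ibuy I S v b s p \<longleftrightarrow> i \<in> Ibuy I S v b s q) \<and> dem S v b s p i = dem S v b s q i"
    "\<forall>i\<in>I. S i \<inter> unsold s \<noteq> {} \<longrightarrow>
      (i \<in> Ibuy I S v b s q \<longleftrightarrow> i \<in> Ibuy I S v b s p) \<and> dem S v b s q i = dem S v b s p i"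
    using assms by (auto simp: Ibuy_eq)
  ultimately have "bmatch S (Ibuy I S v b s p) (unsold s) (dem S v b s p) M \<longleftrightarrow>
      bmatch S (Ibuy I S v b s q) (unsold s) (dem S v b s q) M" for M
    using bmatch_cong_on by blast
  then have "{M. bmatch S (Ibuy I S v b s p) (unsold s) (dem S v b s p) M} =
      {M. bmatch S (Ibuy I S v b s q) (unsold s) (dem S v b s q) M}" by blast
  then show ?thesis unfolding gsize_def msize_def by simp
qed

lemma critical_price_in_breakpoints:
  assumes fin: "finite I" "finite J0" and SJ: "\<forall>i\<in>I. S i \<subseteq> J0"
    and b: "\<forall>i\<in>I. 0 \<le> b i" and inv: "auction_inv I J0 S v b s" and crit: "critical I S v b s p"
  shows "p \<in> price_breakpoints I v b (card J0)"
proof (rule ccontr)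
  assume P: "p \<notin> price_breakpoints I v b (card J0)"
  have p: "cur s \<le> p" "0 < p" "\<And>q. p < q \<Longrightarrow> gsize I S v b s q < gsize I S v b s p"
    using crit unfolding critical_def by auto
  have "cur s = 0 \<or> cur s \<in> price_breakpoints I v b (card J0)"
    using inv unfolding auction_inv_def by blast
  then have cur_p: "cur s < p" using p(1,2) P by (auto simp: le_less)
  define q where "q = Min (insert (p + 1) {x \<in> price_breakpoints I v b (card J0). p < x})"
  have q: "p < q" "\<forall>x\<in>price_breakpoints I v b (card J0). p < x \<longrightarrow> q \<le> x"
    unfolding q_def using finite_price_breakpoints[OF fin(1)] by auto
  have "dem S v b s p i = dem S v b s q i" if i: "i \<in> I" "S i \<inter> unsold s \<noteq> {}" for i
  proof -
    obtain r where r: "bought_at s i r" "xbundle s i \<noteq> {} \<longrightarrow> withdrawn S v b s i r"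
      using inv i(1) unfolding auction_inv_def by blast
    show ?thesis
    proof (cases "xbundle s i = {}")
      case True
      have "card (S i) \<le> card J0" using SJ i(1) fin(2) by (simp add: card_mono)
      then show ?thesis
        using bought_at_empty_unspent[OF r(1) True] demand_const_between_breakpoints[OF P i(1) _ _ p(2) q] b i(1)
        by (simp add: dem_if_unspent)
    next
      case False
      obtain j where "j \<in> S i \<inter> unsold s" using i(2) by blast
      have "dem S v b s x i = 0" if "cur s < x" for x
        using withdrawn_demand[OF r(2)[rule_format, OF False] \<open>j \<in> S i \<inter> unsold s\<close>, of x] that
        by (cases "dem S v b s x i") auto
      then show ?thesis using cur_p q(1) by simp
    qed
  qed
  then have "gsize I S v b s p = gsize I S v b s q" by (intro gsize_eq_if_dem_agree) blast
  then show False using p(3)[OF q(1)] by simp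
qed

lemma procI_buyer:
  assumes inv: "auction_inv I J0 S v b s" and fin: "finite I" "finite (unsold s)"
    and i: "i \<in> I" "0 \<le> b i" "finite (S i)" and p: "cur s \<le> p"
    and mx: "max_bmatch S (Abuy I S v b s p) (unsold s) (dem S v b s p) M"
    and M2: "bmatch S (Qbuy I S v b s p) Jbar (dem S v b s p) M2" "Jbar \<subseteq> unsold s"
    and M1: "aug_part S (Abuy I S v b s p) (unsold s) M = M1"
    and ij: "(i, j) \<in> M1 \<union> M2"
  defines "N \<equiv> M1 \<union> M2"
  shows "(\<forall>j\<in>xbundle s i. iprice s j = p) \<and>
    (S i \<inter> unsold s \<subseteq> {j. (i, j) \<in> N} \<or> b i - (paid s i + p * real (card {j. (i, j) \<in> N})) < p \<or>
     (v i \<le> p \<and> p = v i))"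
proof -
  have bm: "bmatch S (Abuy I S v b s p) (unsold s) (dem S v b s p) M"
    using mx unfolding max_bmatch_def by blast
  have part: "M1 \<subseteq> M" using M1 unfolding aug_part_def by blast
  have j: "j \<in> S i \<inter> unsold s" "0 < dem S v b s p i"
    using ij bmatch_edge[OF bm, of i j] bmatch_edge[OF M2(1), of i j] M2(2) part
    unfolding M1 Abuy_def Qbuy_def by auto
  obtain r where r: "bought_at s i r" "xbundle s i \<noteq> {} \<longrightarrow> withdrawn S v b s i r"
    using inv i(1) unfolding auction_inv_def by blast
  show ?thesis
  proof (cases "xbundle s i = {}")
    case False
    then have "p = v i \<and> r = v i" using withdrawn_demand[OF _ j(1) p j(2)] r(2) by blast
    then show ?thesis using r(1) unfolding bought_at_def by simp
  next
    case True
    have unspent: "paid s i = 0" using bought_at_empty_unspent[OF r(1) True] .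
    show ?thesis
    proof (cases "v i = p")
      case False
      then have no_M2: "(i, j') \<notin> M2" for j' using bmatch_edge[OF M2(1)] unfolding Qbuy_def by blast
      then have ij1: "(i, j) \<in> aug_part S (Abuy I S v b s p) (unsold s) M" using ij M1 by blast
      have "finite (Abuy I S v b s p)" using fin(1) unfolding Abuy_def by simp
      note sat = aug_part_saturated[OF mx this fin(2) ij1]
      have G: "{j. (i, j) \<in> N} = {j. (i, j) \<in> M}" using sat(1) no_M2 M1 unfolding N_def by blast
      have "card {j. (i, j) \<in> M} = demand S v b p i" using sat(2) unspent by (simp add: dem_if_unspent)
      moreover have "{j. (i, j) \<in> M} \<subseteq> S i" using bmatch_edge[OF bm] by blast
      moreover have "0 < p" "p \<le> v i" using dem_pos_imp[OF j(2)] by auto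
      ultimately have "S i \<subseteq> {j. (i, j) \<in> M} \<or> b i - p * real (card {j. (i, j) \<in> M}) < p"
        using i(2,3) by (intro saturated_demand_exhausts)
      then show ?thesis using G True unspent by auto
    qed (simp add: True)
  qed
qed

lemma procII_buyer:
  assumes inv: "auction_inv I J0 S v b s" and fin: "finite I" "finite (unsold s)"
    and i: "i \<in> I" "0 \<le> b i" "finite (S i)" "card (S i) \<le> card J0"
    and p: "cur s \<le> p" "p \<in> price_breakpoints I v b (card J0)"
    and eps: "0 < eps" "eps < eps_bound I v b (card J0)"
    and mx: "max_bmatch S (Ibuy I S v b s (p + eps)) (unsold s) (dem S v b s (p + eps)) M"
    and N: "aug_part S (Ibuy I S v b s (p + eps)) (unsold s) M = N" and ij: "(i, j) \<in> N"
  shows "(\<forall>j\<in>xbundle s i. iprice s j = p + eps) \<and>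
    (S i \<inter> unsold s \<subseteq> {j. (i, j) \<in> N} \<or> b i - (paid s i + (p + eps) * real (card {j. (i, j) \<in> N})) < p)"
proof -
  have bm: "bmatch S (Ibuy I S v b s (p + eps)) (unsold s) (dem S v b s (p + eps)) M"
    using mx unfolding max_bmatch_def by blast
  have "(i, j) \<in> M" using ij unfolding N[symmetric] aug_part_def by blast
  then have j: "j \<in> S i \<inter> unsold s" "0 < dem S v b s (p + eps) i"
    using bmatch_edge[OF bm] unfolding Ibuy_eq by auto
  obtain r where r: "bought_at s i r" "xbundle s i \<noteq> {} \<longrightarrow> withdrawn S v b s i r"
    using inv i(1) unfolding auction_inv_def by blast
  have "xbundle s i = {}"
  proof (rule ccontr)
    assume "xbundle s i \<noteq> {}"
    then have "p + eps = cur s" using withdrawn_demand[OF _ j(1) _ j(2)] r(2) p(1) eps(1) by auto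
    then show False using p(1) eps(1) by simp
  qed
  then have unspent: "paid s i = 0" using bought_at_empty_unspent[OF r(1)] by blast
  have "finite (Ibuy I S v b s (p + eps))" using fin(1) unfolding Ibuy_eq by simp
  note sat = aug_part_saturated[OF mx this fin(2) ij[folded N]]
  define k where "k = card {j. (i, j) \<in> M}"
  have "card {j. (i, j) \<in> M} = demand S v b (p + eps) i"
    using sat(2) unspent by (simp add: dem_if_unspent)
  moreover have GS: "{j. (i, j) \<in> M} \<subseteq> S i" using bmatch_edge[OF bm] by blast
  moreover have "0 < p + eps" "p + eps \<le> v i" using dem_pos_imp[OF j(2)] by auto
  ultimately have "S i \<subseteq> {j. (i, j) \<in> M} \<or> b i - (p + eps) * real k < p + eps"
    unfolding k_def using i(2,3) by (intro saturated_demand_exhausts)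
  moreover have "1 \<le> k" "k \<le> card J0"
    using \<open>(i, j) \<in> M\<close> GS i(3,4) card_mono[OF i(3) GS] unfolding k_def
    by (auto simp: Suc_le_eq card_gt_0_iff intro: finite_subset)
  ultimately have "S i \<subseteq> {j. (i, j) \<in> M} \<or> b i - (p + eps) * real k < p"
    using budget_below_breakpoint[OF fin(1) i(1) p(2) _ _ eps] by blast
  then show ?thesis using sat(1) unspent \<open>xbundle s i = {}\<close> unfolding N[symmetric] k_def by auto
qed

lemma alg_step_preserves_inv:
  assumes fin: "finite I" "finite J0" and SJ: "\<forall>i\<in>I. S i \<subseteq> J0"
    and b: "\<forall>i\<in>I. 0 \<le> b i" and eps: "0 < eps" "eps < eps_bound I v b (card J0)"
    and inv: "auction_inv I J0 S v b s" and step: "alg_step I S v b eps s s'"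
  shows "auction_inv I J0 S v b s'"
proof -
  have fin_unsold: "finite (unsold s)" using finite_unsold[OF inv fin(2)] .
  have buyer: "0 \<le> b i" "finite (S i)" "card (S i) \<le> card J0" if "i \<in> I" for i
  proof -
    show "0 \<le> b i" using b that by blast
    show "finite (S i)" using SJ fin(2) finite_subset that by blast
    show "card (S i) \<le> card J0" using SJ card_mono[OF fin(2)] that by blast
  qed
  have crit: "cur s \<le> p" "p \<in> price_breakpoints I v b (card J0)" if "is_critical_least I S v b s p" for p
    using that critical_price_in_breakpoints[OF fin SJ b inv]
    unfolding is_critical_least_def critical_def by blast+
  from step show ?thesis
  proof cases
    case (procI p JQ M Jbar M1 M2)
    have M1: "aug_part S (Abuy I S v b s p) (unsold s) M = M1"
      using procI(6,7) unfolding aug_part_def by blast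
    have M2: "bmatch S (Qbuy I S v b s p) Jbar (dem S v b s p) M2"
      using procI(8) unfolding max_bmatch_def by blast
    have Jbar: "Jbar \<subseteq> unsold s" using procI(6) by blast
    have "auction_inv I J0 S v b ((give (s\<lparr>cur := p\<rparr>) (M1 \<union> M2) p)\<lparr>unsold := unsold s - snd ` (M1 \<union> M2)\<rparr>)"
    proof (rule give_preserves_inv[OF fin(2) inv crit[OF procI(1)]])
      show "M1 \<union> M2 \<subseteq> I \<times> unsold s"
        using aug_part_subset[OF procI(4)] M1 M2 Jbar unfolding bmatch_def Abuy_def Qbuy_def by blast
    next
      fix i assume "i \<in> I" "{j. (i, j) \<in> M1 \<union> M2} \<noteq> {}"
      then obtain j where "(i, j) \<in> M1 \<union> M2" by blast
      from procI_buyer[OF inv fin(1) fin_unsold \<open>i \<in> I\<close> buyer(1,2)[OF \<open>i \<in> I\<close>] crit(1)[OF procI(1)]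
          procI(4) M2 Jbar M1 this]
      show "(\<forall>j\<in>xbundle s i. iprice s j = p) \<and> (S i \<inter> unsold s \<subseteq> {j. (i, j) \<in> M1 \<union> M2} \<or>
          b i - (paid s i + p * real (card {j. (i, j) \<in> M1 \<union> M2})) < p \<or> v i \<le> p \<and> p = v i)" .
    qed simp
    then show ?thesis using procI(9) give_unsold_idem[of "s\<lparr>cur := p\<rparr>"] by simp
  next
    case (procII p q M Jbar M1 s1)
    have M1: "aug_part S (Ibuy I S v b s (p + eps)) (unsold s) M = M1"
      using procII(3,5,6) unfolding aug_part_def by blast
    have U: "unsold s' \<subseteq> unsold s - snd ` M1" using procII(7,8) by (auto simp: give_def)
    have "auction_inv I J0 S v b ((give (s\<lparr>cur := p\<rparr>) M1 (p + eps))\<lparr>unsold := unsold s'\<rparr>)"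
    proof (rule give_preserves_inv[OF fin(2) inv crit[OF procII(1)] _ U])
      show "M1 \<subseteq> I \<times> unsold s" using aug_part_subset[OF procII(4)[unfolded procII(3)]] M1 unfolding Ibuy_eq by blast
    next
      fix i assume "i \<in> I" "{j. (i, j) \<in> M1} \<noteq> {}"
      then obtain j where "(i, j) \<in> M1" by blast
      from procII_buyer[OF inv fin(1) fin_unsold \<open>i \<in> I\<close> buyer[OF \<open>i \<in> I\<close>] crit[OF procII(1)] eps
          procII(4)[unfolded procII(3)] M1 this]
      show "(\<forall>j\<in>xbundle s i. iprice s j = p + eps) \<and> (S i \<inter> unsold s \<subseteq> {j. (i, j) \<in> M1} \<or>
          b i - (paid s i + (p + eps) * real (card {j. (i, j) \<in> M1})) < p \<or> v i \<le> p \<and> p + eps = v i)"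
        by blast
    qed
    then show ?thesis using procII(3,7,8) by simp
  qed
qed

lemma alg_reachable_inv:
  assumes "finite I" "finite J0" "\<forall>i\<in>I. S i \<subseteq> J0" "\<forall>i\<in>I. 0 \<le> b i"
    and "0 < eps" "eps < eps_bound I v b (card J0)"
    and "(alg_step I S v b eps)\<^sup>*\<^sup>* (init_state J0) s"
  shows "auction_inv I J0 S v b s"
  using assms(7)
proof (induction rule: rtranclp_induct)
  case base
  show ?case by (rule auction_inv_init)
next
  case (step s s')
  then show ?case using alg_step_preserves_inv[OF assms(1-6)] by blast
qed

theorem lemma5:
  fixes I :: "'b set" and J0 :: "'j set" and S :: "'b \<Rightarrow> 'j set"
    and v b :: "'b \<Rightarrow> real"
  assumes "finite I" and "finite J0"
    and "\<forall>i\<in>I. S i \<subseteq> J0"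
    and "\<forall>i\<in>I. 0 < v i"
    and "\<forall>i\<in>I. v i \<le> b i"
  shows "\<exists>\<epsilon>0>0. \<forall>eps. 0 < eps \<and> eps < \<epsilon>0 \<longrightarrow>
           (\<forall>s. alg_outcome I J0 S v b eps s \<longrightarrow>
              (\<forall>i\<in>I. xbundle s i \<noteq> {} \<longrightarrow>
                 (\<forall>j\<in>xbundle s i. iprice s j = paid s i / real (card (xbundle s i)))))"
proof (intro exI[of _ "eps_bound I v b (card J0)"] conjI allI impI ballI)
  show "0 < eps_bound I v b (card J0)" using eps_bound_pos[OF assms(1)] .
next
  fix eps s i j
  assume eps: "0 < eps \<and> eps < eps_bound I v b (card J0)" and out: "alg_outcome I J0 S v b eps s"
    and i: "i \<in> I" "xbundle s i \<noteq> {}" and j: "j \<in> xbundle s i"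
  \<comment> \<open>the hypothesis v_i \<le> b_i enters only through b_i \<ge> 0\<close>
  have "\<forall>i\<in>I. 0 \<le> b i" using assms(4,5) by force
  then have inv: "auction_inv I J0 S v b s"
    using alg_reachable_inv[OF assms(1-3)] eps out unfolding alg_outcome_def by blast
  then obtain r where "bought_at s i r" using i(1) unfolding auction_inv_def by blast
  moreover have "card (xbundle s i) > 0" using inv i(2) unfolding auction_inv_def by (auto simp: card_gt_0_iff)
  ultimately show "iprice s j = paid s i / real (card (xbundle s i))" using j unfolding bought_at_def by simp
qed

end
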